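(* Let $M$ be a matroid on $E$ and let $(M_1,\dots,M_d)$ be a $d$-th symmetric power of $M$. Then for every flat $F$ of $M$, the set $F\cdot\mathrm{Sym}_{d-1}(E)$ is a flat of $M_d$.
   Context: $\mathrm{Sym}_d(E)$: multisets of size $d$ from $E$, written multiplicatively, $\mathrm{Sym}_0(E)=\{1\}$; $F\cdot\mathrm{Sym}_{d-1}(E)$ is the set of elements of $\mathrm{Sym}_d(E)$ containing at least one element of $F$. For $\alpha\in\mathrm{Sym}_{d-i}(E)$ and a matroid $N$ on $\mathrm{Sym}_d(E)$, $N|_\alpha$ is the restriction to $\{\alpha\beta:\beta\in\mathrm{Sym}_i(E)\}$. A $d$-th symmetric quasi power of $M$ is a sequence $(M_1,\dots,M_d)$ of matroids, $M_1=M$, $M_i$ on $\mathrm{Sym}_i(E)$, such that for every $1\le i\le d$ and $\alpha\in\mathrm{Sym}_{d-i}(E)$: if no element of $\alpha$ is a loop of $M$, $\beta\mapsto\alpha\beta$ is an isomorphism $M_i\cong M_d|_\alpha$; otherwise $\mathrm{rk}(M_d|_\alpha)=0$. It is a $d$-th symmetric power if also $\mathrm{rk}(M_d)=\binom{\mathrm{rk}(M)+d-1}{d}$. *)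

theory Defs
  imports Main "HOL-Library.Multiset"
begin

definition matroid :: "'a set \<Rightarrow> ('a set \<Rightarrow> bool) \<Rightarrow> bool" where
  "matroid E indep \<longleftrightarrow>
     finite E \<and> indep {} \<and>
     (\<forall>X. indep X \<longrightarrow> X \<subseteq> E) \<and>
     (\<forall>X Y. indep X \<and> Y \<subseteq> X \<longrightarrow> indep Y) \<and>
     (\<forall>X Y. indep X \<and> indep Y \<and> card X < card Y \<longrightarrow>
        (\<exists>y\<in>Y - X. indep (insert y X)))"

definition rk :: "('a set \<Rightarrow> bool) \<Rightarrow> 'a set \<Rightarrow> nat" where
  "rk indep X = Max {card I | I. I \<subseteq> X \<and> indep I}"

definition flat :: "'a set \<Rightarrow> ('a set \<Rightarrow> bool) \<Rightarrow> 'a set \<Rightarrow> bool" where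
  "flat E indep F \<longleftrightarrow> F \<subseteq> E \<and> (\<forall>e\<in>E - F. rk indep (insert e F) > rk indep F)"

definition loop :: "'a set \<Rightarrow> ('a set \<Rightarrow> bool) \<Rightarrow> 'a \<Rightarrow> bool" where
  "loop E indep e \<longleftrightarrow> e \<in> E \<and> \<not> indep {e}"

definition restr :: "('a set \<Rightarrow> bool) \<Rightarrow> 'a set \<Rightarrow> 'a set \<Rightarrow> bool" where
  "restr indep S = (\<lambda>X. indep X \<and> X \<subseteq> S)"

definition matroid_iso ::
  "('a \<Rightarrow> 'b) \<Rightarrow> 'a set \<Rightarrow> ('a set \<Rightarrow> bool) \<Rightarrow> 'b set \<Rightarrow> ('b set \<Rightarrow> bool) \<Rightarrow> bool" where
  "matroid_iso f E1 indep1 E2 indep2 \<longleftrightarrow>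
     bij_betw f E1 E2 \<and> (\<forall>X. X \<subseteq> E1 \<longrightarrow> (indep1 X \<longleftrightarrow> indep2 (f ` X)))"

text \<open>Sym_d(E): multisets of size d with elements in E; product is multiset sum.\<close>
definition Sym :: "nat \<Rightarrow> 'a set \<Rightarrow> 'a multiset set" where
  "Sym d E = {m. set_mset m \<subseteq> E \<and> size m = d}"

text \<open>F . Sym_{d-1}(E): elements of Sym_d(E) containing some element of F.\<close>
definition FSym :: "'a set \<Rightarrow> nat \<Rightarrow> 'a set \<Rightarrow> 'a multiset set" where
  "FSym F d E = {m \<in> Sym d E. \<exists>x\<in>F. x \<in># m}"

text \<open>Ms i is the independence predicate of M_i on ground set Sym_i(E), 1 \<le> i \<le> d.
  M_1 = M is understood via the identification e \<leftrightarrow> {#e#}.\<close>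
definition sym_quasi_power ::
  "'a set \<Rightarrow> ('a set \<Rightarrow> bool) \<Rightarrow> nat \<Rightarrow> (nat \<Rightarrow> 'a multiset set \<Rightarrow> bool) \<Rightarrow> bool" where
  "sym_quasi_power E indep d Ms \<longleftrightarrow>
     (\<forall>i\<in>{1..d}. matroid (Sym i E) (Ms i)) \<and>
     matroid_iso (\<lambda>e. {#e#}) E indep (Sym 1 E) (Ms 1) \<and>
     (\<forall>i\<in>{1..d}. \<forall>\<alpha>\<in>Sym (d - i) E.
        let S = {\<alpha> + \<beta> | \<beta>. \<beta> \<in> Sym i E} in
        (if (\<forall>a\<in>#\<alpha>. \<not> loop E indep a)
         then matroid_iso (\<lambda>\<beta>. \<alpha> + \<beta>) (Sym i E) (Ms i) S (restr (Ms d) S)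
         else rk (Ms d) S = 0))"

definition sym_power ::
  "'a set \<Rightarrow> ('a set \<Rightarrow> bool) \<Rightarrow> nat \<Rightarrow> (nat \<Rightarrow> 'a multiset set \<Rightarrow> bool) \<Rightarrow> bool" where
  "sym_power E indep d Ms \<longleftrightarrow>
     sym_quasi_power E indep d Ms \<and>
     rk (Ms d) (Sym d E) = (rk indep E + d - 1) choose d"

end

theory Submission
  imports Defs
begin

text \<open>
  A multiset m outside F \<cdot> Sym_{d-1}(E) splits as m = \<alpha>\<beta> with no element of \<alpha>\<beta> in F, and
  one shows by induction on k = |\<beta>| that adding \<alpha>\<beta> to \<alpha> \<cdot> F \<cdot> Sym_{k-1}(E) raises the rank
  of M_d; k = d is the theorem. For the step pick e in \<beta> and put X = \<alpha> \<cdot> F \<cdot> Sym_{k-1}(E),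
  U = \<alpha>e \<cdot> Sym_{k-1}(E), so that X \<inter> U = \<alpha>e \<cdot> F \<cdot> Sym_{k-2}(E) and \<alpha>\<beta> \<in> U.
  Submodularity transports the induction hypothesis from X \<inter> U to X, provided X and U form a
  modular pair. They do, because both are spanned by their intersection with the independent
  set \<alpha> \<cdot> Sym_k(B), where B is a basis of M containing e and a basis of F. Independence is where
  the rank condition of a symmetric power enters: Sym_d(B) spans M_d and has exactly rk(M_d)
  elements, so it is a basis of M_d.
\<close>

lemma Sym_eq_multisets_of_size: "Sym d E = multisets_of_size E d"
  by (simp add: Sym_def multisets_of_size_def)

lemma finite_Sym: "finite E \<Longrightarrow> finite (Sym d E)"
  by (simp add: Sym_eq_multisets_of_size finite_multisets_of_size)

lemma card_Sym: "finite E \<Longrightarrow> card (Sym d E) = (card E + d - 1) choose d"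
  by (simp add: Sym_eq_multisets_of_size card_multisets_of_size)

lemma Sym_mono: "B \<subseteq> E \<Longrightarrow> Sym d B \<subseteq> Sym d E"
  by (auto simp: Sym_def)

locale finite_matroid =
  fixes E :: "'a set" and indep :: "'a set \<Rightarrow> bool"
  assumes matroid: "matroid E indep"
begin

lemma finite_ground: "finite E"
  using matroid by (simp add: matroid_def)

lemma indep_empty: "indep {}"
  using matroid by (simp add: matroid_def)

lemma indep_subset_ground: "indep X \<Longrightarrow> X \<subseteq> E"
  using matroid by (simp add: matroid_def)

lemma indep_subset: "indep X \<Longrightarrow> Y \<subseteq> X \<Longrightarrow> indep Y"
  using matroid unfolding matroid_def by blast

lemma indep_augment: "indep X \<Longrightarrow> indep Y \<Longrightarrow> card X < card Y \<Longrightarrow> \<exists>y\<in>Y - X. indep (insert y X)"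
  using matroid unfolding matroid_def by blast

lemma indep_finite: "indep X \<Longrightarrow> finite X"
  using indep_subset_ground finite_ground finite_subset by blast

lemma finite_indep_cards: "finite {card I | I. I \<subseteq> X \<and> indep I}"
proof -
  have "{card I | I. I \<subseteq> X \<and> indep I} \<subseteq> {0..card E}"
    using indep_subset_ground finite_ground card_mono by fastforce
  then show ?thesis
    using finite_subset by blast
qed

lemma card_le_rk: "indep I \<Longrightarrow> I \<subseteq> X \<Longrightarrow> card I \<le> rk indep X"
  unfolding rk_def by (rule Max_ge[OF finite_indep_cards]) blast

lemma obtain_rk_indep:
  obtains I where "I \<subseteq> X" "indep I" "card I = rk indep X"
proof -
  have "{card I | I. I \<subseteq> X \<and> indep I} \<noteq> {}"
    using indep_empty by blast
  then have "rk indep X \<in> {card I | I. I \<subseteq> X \<and> indep I}"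
    unfolding rk_def by (rule Max_in[OF finite_indep_cards])
  then show ?thesis
    using that by auto
qed

lemma rk_le_card:
  assumes "finite X"
  shows "rk indep X \<le> card X"
proof -
  obtain I where "I \<subseteq> X" "indep I" "card I = rk indep X"
    by (rule obtain_rk_indep)
  then show ?thesis
    using card_mono[OF assms] by metis
qed

lemma rk_mono:
  assumes "X \<subseteq> Y"
  shows "rk indep X \<le> rk indep Y"
proof -
  obtain I where "I \<subseteq> X" "indep I" "card I = rk indep X"
    by (rule obtain_rk_indep)
  then show ?thesis
    using card_le_rk[of I Y] assms by auto
qed

lemma rk_indep: "indep I \<Longrightarrow> rk indep I = card I"
  using card_le_rk[of I I] rk_le_card[OF indep_finite] by (simp add: le_antisym)

lemma indep_if_rk_eq_card:
  assumes "finite X" "rk indep X = card X"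
  shows "indep X"
proof -
  obtain I where "I \<subseteq> X" "indep I" "card I = rk indep X"
    by (rule obtain_rk_indep)
  with assms have "I = X"
    using card_subset_eq by metis
  with \<open>indep I\<close> show ?thesis
    by simp
qed

lemma indep_extend:
  assumes "indep I" "I \<subseteq> X"
  shows "\<exists>J. I \<subseteq> J \<and> J \<subseteq> X \<and> indep J \<and> card J = rk indep X"
  using assms
proof (induction "rk indep X - card I" arbitrary: I rule: less_induct)
  case less
  show ?case
  proof (cases "card I < rk indep X")
    case True
    obtain K where K: "K \<subseteq> X" "indep K" "card K = rk indep X"
      by (rule obtain_rk_indep)
    then obtain y where y: "y \<in> K - I" "indep (insert y I)"
      using indep_augment[OF less.prems(1) K(2)] True K(3) by auto
    have "card (insert y I) = Suc (card I)"
      using y indep_finite[OF less.prems(1)] by simp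
    then have smaller: "rk indep X - card (insert y I) < rk indep X - card I"
      using True by simp
    have "insert y I \<subseteq> X"
      using y K less.prems by blast
    then obtain J where "insert y I \<subseteq> J" "J \<subseteq> X" "indep J" "card J = rk indep X"
      using less.hyps[OF smaller y(2)] by blast
    then show ?thesis
      by blast
  next
    case False
    then have "card I = rk indep X"
      using card_le_rk[OF less.prems] by simp
    then show ?thesis
      using less.prems by blast
  qed
qed

lemma rk_submodular: "rk indep (X \<union> Y) + rk indep (X \<inter> Y) \<le> rk indep X + rk indep Y"
proof -
  obtain J where J: "J \<subseteq> X \<inter> Y" "indep J" "card J = rk indep (X \<inter> Y)"
    by (rule obtain_rk_indep)
  then obtain K where K: "J \<subseteq> K" "K \<subseteq> X \<union> Y" "indep K" "card K = rk indep (X \<union> Y)"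
    using indep_extend[of J "X \<union> Y"] by blast
  have fin: "finite K"
    using indep_finite K(3) by blast
  have "card J \<le> card (K \<inter> X \<inter> Y)"
    using J K fin by (intro card_mono) auto
  moreover have "card (K \<inter> X) + card (K \<inter> Y) = card K + card (K \<inter> X \<inter> Y)"
  proof -
    have "(K \<inter> X) \<union> (K \<inter> Y) = K" "(K \<inter> X) \<inter> (K \<inter> Y) = K \<inter> X \<inter> Y"
      using K by blast+
    then show ?thesis
      using card_Un_Int[of "K \<inter> X" "K \<inter> Y"] fin by simp
  qed
  moreover have "card (K \<inter> X) \<le> rk indep X" "card (K \<inter> Y) \<le> rk indep Y"
    using K by (auto intro!: card_le_rk dest: indep_subset[of K])
  ultimately show ?thesis
    using J K by linarith
qed

definition in_closure :: "'a \<Rightarrow> 'a set \<Rightarrow> bool" where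
  "in_closure a Y \<longleftrightarrow> rk indep (insert a Y) = rk indep Y"

lemma in_closure_mem: "a \<in> Y \<Longrightarrow> in_closure a Y"
  by (simp add: in_closure_def insert_absorb)

lemma in_closure_mono:
  assumes "in_closure a A" "A \<subseteq> W"
  shows "in_closure a W"
proof -
  have "W \<union> insert a A = insert a W"
    using assms(2) by blast
  then have "rk indep (insert a W) + rk indep (W \<inter> insert a A) \<le> rk indep W + rk indep (insert a A)"
    using rk_submodular[of W "insert a A"] by simp
  moreover have "rk indep A \<le> rk indep (W \<inter> insert a A)" "rk indep W \<le> rk indep (insert a W)"
    using assms by (auto intro: rk_mono)
  ultimately show ?thesis
    using assms(1) unfolding in_closure_def by linarith
qed

lemma rk_Un_closure:
  assumes "finite A" "\<forall>a\<in>A. in_closure a Y"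
  shows "rk indep (Y \<union> A) = rk indep Y"
  using assms
proof (induction A rule: finite_induct)
  case (insert a A)
  then have "in_closure a (Y \<union> A)"
    using in_closure_mono by blast
  with insert show ?case
    by (simp add: in_closure_def)
qed simp

lemma rk_le_if_closure: "finite X \<Longrightarrow> \<forall>x\<in>X. in_closure x T \<Longrightarrow> rk indep X \<le> rk indep T"
  using rk_Un_closure rk_mono[of X "T \<union> X"] by simp

lemma in_closure_trans:
  assumes "finite A" "\<forall>b\<in>A. in_closure b Y" "in_closure a A"
  shows "in_closure a Y"
proof -
  have "in_closure a (Y \<union> A)"
    using assms(3) in_closure_mono by blast
  then have "rk indep (insert a (Y \<union> A)) = rk indep Y"
    using rk_Un_closure[OF assms(1,2)] by (simp add: in_closure_def)
  moreover have "rk indep (insert a Y) \<le> rk indep (insert a (Y \<union> A))" "rk indep Y \<le> rk indep (insert a Y)"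
    by (auto intro: rk_mono)
  ultimately show ?thesis
    by (simp add: in_closure_def)
qed

lemma in_closure_basis:
  assumes "indep J" "J \<subseteq> X" "card J = rk indep X" "x \<in> X"
  shows "in_closure x J"
proof -
  have "rk indep (insert x J) \<le> rk indep X" "rk indep J \<le> rk indep (insert x J)"
    using assms by (auto intro: rk_mono)
  then show ?thesis
    using assms rk_indep unfolding in_closure_def by simp
qed

lemma rk_modular_if_spanned:
  assumes "indep C" "finite X" "finite U"
    and "\<forall>x\<in>X. in_closure x (C \<inter> X)" "\<forall>u\<in>U. in_closure u (C \<inter> U)"
  shows "rk indep X + rk indep U \<le> rk indep (X \<union> U) + rk indep (X \<inter> U)"
proof -
  have fin: "finite C"
    using indep_finite assms(1) by blast
  have "rk indep X \<le> card (C \<inter> X)" "rk indep U \<le> card (C \<inter> U)"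
    using rk_le_if_closure[OF assms(2,4)] rk_le_if_closure[OF assms(3,5)]
      rk_le_card[of "C \<inter> X"] rk_le_card[of "C \<inter> U"] fin by auto
  moreover have "card (C \<inter> X) + card (C \<inter> U) = card (C \<inter> (X \<union> U)) + card (C \<inter> (X \<inter> U))"
    using card_Un_Int[of "C \<inter> X" "C \<inter> U"] fin by (simp add: Int_Un_distrib Int_assoc Int_left_commute)
  moreover have "card (C \<inter> (X \<union> U)) \<le> rk indep (X \<union> U)" "card (C \<inter> (X \<inter> U)) \<le> rk indep (X \<inter> U)"
    using assms(1) by (auto intro!: card_le_rk dest: indep_subset[of C])
  ultimately show ?thesis
    by linarith
qed

lemma flat_insert_basis_indep:
  assumes "flat E indep F" "e \<in> E - F" "indep I" "I \<subseteq> F" "card I = rk indep F"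
  shows "indep (insert e I)"
proof -
  have less: "rk indep F < rk indep (insert e F)"
    using assms(1,2) unfolding flat_def by blast
  obtain J where J: "I \<subseteq> J" "J \<subseteq> insert e F" "indep J" "card J = rk indep (insert e F)"
    using indep_extend[of I "insert e F"] assms by blast
  have "e \<in> J"
  proof (rule ccontr)
    assume "e \<notin> J"
    then have "card J \<le> rk indep F"
      using J card_le_rk by blast
    with less J(4) show False
      by linarith
  qed
  then show ?thesis
    using J indep_subset by blast
qed

lemma flat_not_loop: "flat E indep F \<Longrightarrow> e \<in> E - F \<Longrightarrow> \<not> loop E indep e"
  unfolding loop_def
  by (metis obtain_rk_indep flat_insert_basis_indep indep_subset empty_subsetI insert_mono)

end

lemma rk_matroid_iso:
  assumes "matroid_iso f E1 indep1 E2 indep2" "X \<subseteq> E1"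
  shows "rk indep2 (f ` X) = rk indep1 X"
proof -
  have inj: "inj_on f X"
    using assms unfolding matroid_iso_def bij_betw_def by (blast intro: inj_on_subset)
  have indep_iff: "\<And>Y. Y \<subseteq> X \<Longrightarrow> indep1 Y \<longleftrightarrow> indep2 (f ` Y)"
    using assms unfolding matroid_iso_def by blast
  have "{card J | J. J \<subseteq> f ` X \<and> indep2 J} = {card (f ` I) | I. I \<subseteq> X \<and> indep2 (f ` I)}"
    by (metis (no_types, opaque_lifting) subset_image_iff)
  also have "\<dots> = {card I | I. I \<subseteq> X \<and> indep1 I}"
    using indep_iff card_image inj_on_subset[OF inj] by metis
  finally show ?thesis
    by (simp add: rk_def)
qed

lemma rk_restr:
  assumes "X \<subseteq> S"
  shows "rk (restr indep S) X = rk indep X"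
proof -
  have "{card I | I. I \<subseteq> X \<and> restr indep S I} = {card I | I. I \<subseteq> X \<and> indep I}"
    using assms unfolding restr_def by blast
  then show ?thesis
    by (simp add: rk_def)
qed

definition loop_free :: "'a set \<Rightarrow> ('a set \<Rightarrow> bool) \<Rightarrow> 'a multiset \<Rightarrow> bool" where
  "loop_free E indep \<alpha> \<longleftrightarrow> (\<forall>a\<in>#\<alpha>. \<not> loop E indep a)"

locale symmetric_quasi_power = finite_matroid E indep for E :: "'a set" and indep +
  fixes d :: nat and Ms :: "nat \<Rightarrow> 'a multiset set \<Rightarrow> bool"
  assumes d_pos: "1 \<le> d" and quasi_power: "sym_quasi_power E indep d Ms"
begin

sublocale Md: finite_matroid "Sym d E" "Ms d"
  using quasi_power d_pos unfolding sym_quasi_power_def finite_matroid_def by simp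

lemma translate_cases:
  assumes "i \<in> {1..d}" "\<alpha> \<in> Sym (d - i) E"
  shows "loop_free E indep \<alpha> \<Longrightarrow>
      matroid_iso ((+) \<alpha>) (Sym i E) (Ms i) ((+) \<alpha> ` Sym i E) (restr (Ms d) ((+) \<alpha> ` Sym i E))"
    and "\<not> loop_free E indep \<alpha> \<Longrightarrow> rk (Ms d) ((+) \<alpha> ` Sym i E) = 0"
proof -
  have image: "{\<alpha> + \<beta> | \<beta>. \<beta> \<in> Sym i E} = (+) \<alpha> ` Sym i E"
    by blast
  have "let S = {\<alpha> + \<beta> | \<beta>. \<beta> \<in> Sym i E} in
        if \<forall>a\<in>#\<alpha>. \<not> loop E indep a
        then matroid_iso ((+) \<alpha>) (Sym i E) (Ms i) S (restr (Ms d) S)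
        else rk (Ms d) S = 0"
    using quasi_power assms unfolding sym_quasi_power_def by blast
  then have "if loop_free E indep \<alpha>
        then matroid_iso ((+) \<alpha>) (Sym i E) (Ms i) ((+) \<alpha> ` Sym i E) (restr (Ms d) ((+) \<alpha> ` Sym i E))
        else rk (Ms d) ((+) \<alpha> ` Sym i E) = 0"
    unfolding Let_def loop_free_def image .
  then show "loop_free E indep \<alpha> \<Longrightarrow> matroid_iso ((+) \<alpha>) (Sym i E) (Ms i) ((+) \<alpha> ` Sym i E)
      (restr (Ms d) ((+) \<alpha> ` Sym i E))"
    and "\<not> loop_free E indep \<alpha> \<Longrightarrow> rk (Ms d) ((+) \<alpha> ` Sym i E) = 0"
    by simp_all
qed

lemma rk_translate:
  assumes "i \<in> {1..d}" "\<alpha> \<in> Sym (d - i) E" "loop_free E indep \<alpha>" "X \<subseteq> Sym i E"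
  shows "rk (Ms d) ((+) \<alpha> ` X) = rk (Ms i) X"
  using rk_matroid_iso[OF translate_cases(1)[OF assms(1-3)] assms(4)] assms(4)
  by (simp add: rk_restr image_mono)

lemma rk_singletons: "S \<subseteq> E \<Longrightarrow> rk (Ms 1) ((\<lambda>e. {#e#}) ` S) = rk indep S"
  using quasi_power rk_matroid_iso unfolding sym_quasi_power_def by blast

lemma rk_translate_singletons:
  assumes "\<delta> \<in> Sym (d - 1) E" "loop_free E indep \<delta>" "S \<subseteq> E"
  shows "rk (Ms d) ((\<lambda>s. \<delta> + {#s#}) ` S) = rk indep S"
proof -
  have "(\<lambda>s. \<delta> + {#s#}) ` S = (+) \<delta> ` ((\<lambda>e. {#e#}) ` S)" "(\<lambda>e. {#e#}) ` S \<subseteq> Sym 1 E"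
    using assms(3) by (auto simp: Sym_def)
  then show ?thesis
    using rk_translate[OF _ assms(1,2)] rk_singletons[OF assms(3)] d_pos by simp
qed

text \<open>If \<delta> contains a loop of M, all of \<delta> \<cdot> E has rank 0 in M_d, so the claim holds trivially.\<close>

lemma in_closure_translate_singleton:
  assumes "\<delta> \<in> Sym (d - 1) E" "x \<in> E" "S \<subseteq> E" "in_closure x S"
  shows "Md.in_closure (\<delta> + {#x#}) ((\<lambda>s. \<delta> + {#s#}) ` S)"
proof (cases "loop_free E indep \<delta>")
  case True
  then show ?thesis
    using assms rk_translate_singletons[of \<delta> "insert x S"] rk_translate_singletons[of \<delta> S]
    unfolding in_closure_def Md.in_closure_def by simp
next
  case False
  have zero: "rk (Ms d) ((+) \<delta> ` Sym 1 E) = 0"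
    using translate_cases(2)[OF _ assms(1) False] d_pos by simp
  have "T \<subseteq> E \<Longrightarrow> rk (Ms d) ((\<lambda>s. \<delta> + {#s#}) ` T) = 0" for T
    using Md.rk_mono[of "(\<lambda>s. \<delta> + {#s#}) ` T" "(+) \<delta> ` Sym 1 E"] zero
    by (fastforce simp: Sym_def image_iff)
  then show ?thesis
    using assms(2,3) unfolding Md.in_closure_def by (metis image_insert insert_subset)
qed

lemma in_closure_translate_Sym:
  assumes B: "B \<subseteq> E" "\<forall>x\<in>E. in_closure x B"
  shows "j \<le> d \<Longrightarrow> \<delta> \<in> Sym (d - j) E \<Longrightarrow> \<gamma> \<in> Sym j E \<Longrightarrow>
    Md.in_closure (\<delta> + \<gamma>) ((+) \<delta> ` Sym j B)"
proof (induction j arbitrary: \<delta> \<gamma>)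
  case 0
  then show ?case
    by (intro Md.in_closure_mem) (force simp: Sym_def)
next
  case (Suc j)
  then obtain x where x: "x \<in># \<gamma>"
    by (cases \<gamma>) (auto simp: Sym_def)
  define \<gamma>' where "\<gamma>' = \<gamma> - {#x#}"
  define \<delta>' where "\<delta>' = \<delta> + {#x#}"
  have xE: "x \<in> E" and \<gamma>': "\<gamma>' \<in> Sym j E" and \<delta>': "\<delta>' \<in> Sym (d - j) E"
    using x Suc.prems by (auto simp: Sym_def \<gamma>'_def \<delta>'_def size_Diff_singleton dest: in_diffD)
  have step: "\<delta>' + \<gamma>' = \<delta> + \<gamma>"
    using x by (simp add: \<gamma>'_def \<delta>'_def)
  have IH: "Md.in_closure (\<delta>' + \<gamma>') ((+) \<delta>' ` Sym j B)"
    using Suc.IH[OF _ \<delta>' \<gamma>'] Suc.prems by simp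
  have closure_step: "\<forall>a\<in>(+) \<delta>' ` Sym j B. Md.in_closure a ((+) \<delta> ` Sym (Suc j) B)"
  proof
    fix a assume "a \<in> (+) \<delta>' ` Sym j B"
    then obtain \<eta> where \<eta>: "\<eta> \<in> Sym j B" "a = \<delta>' + \<eta>"
      by blast
    then have a: "a = (\<delta> + \<eta>) + {#x#}"
      by (simp add: \<delta>'_def)
    have "\<delta> + \<eta> \<in> Sym (d - 1) E"
      using \<eta>(1) Suc.prems B(1) by (auto simp: Sym_def)
    then have "Md.in_closure ((\<delta> + \<eta>) + {#x#}) ((\<lambda>s. (\<delta> + \<eta>) + {#s#}) ` B)"
      using in_closure_translate_singleton[OF _ xE B(1)] B(2) xE by blast
    moreover have "(\<lambda>s. (\<delta> + \<eta>) + {#s#}) ` B \<subseteq> (+) \<delta> ` Sym (Suc j) B"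
    proof (rule image_subsetI)
      fix s assume "s \<in> B"
      then have "\<eta> + {#s#} \<in> Sym (Suc j) B"
        using \<eta>(1) by (auto simp: Sym_def)
      then show "(\<delta> + \<eta>) + {#s#} \<in> (+) \<delta> ` Sym (Suc j) B"
        by (metis add.assoc imageI)
    qed
    ultimately show "Md.in_closure a ((+) \<delta> ` Sym (Suc j) B)"
      using a Md.in_closure_mono by blast
  qed
  have "finite ((+) \<delta>' ` Sym j B)"
    using finite_Sym finite_ground B(1) finite_subset by blast
  then show ?case
    using Md.in_closure_trans[OF _ closure_step IH] step by simp
qed

end

locale symmetric_power = symmetric_quasi_power +
  assumes rk_top: "rk (Ms d) (Sym d E) = (rk indep E + d - 1) choose d"
begin

lemma indep_Sym_basis:
  assumes "B \<subseteq> E" "indep B" "card B = rk indep E"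
  shows "Ms d (Sym d B)"
proof -
  have spans: "\<forall>x\<in>E. in_closure x B"
    using in_closure_basis assms by blast
  have "Md.in_closure ({#} + x) ((+) {#} ` Sym d B)" if "x \<in> Sym d E" for x
    using in_closure_translate_Sym[OF assms(1) spans, of d "{#}" x] that by (simp add: Sym_def)
  then have "\<forall>x\<in>Sym d E. Md.in_closure x (Sym d B)"
    by simp
  then have "rk (Ms d) (Sym d E) \<le> rk (Ms d) (Sym d B)"
    by (rule Md.rk_le_if_closure[OF finite_Sym[OF finite_ground], rotated])
  moreover have fin: "finite B"
    using assms(1) finite_ground finite_subset by blast
  moreover have "rk (Ms d) (Sym d B) \<le> card (Sym d B)"
    using Md.rk_le_card finite_Sym fin by blast
  moreover have "card (Sym d B) = rk (Ms d) (Sym d E)"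
    using card_Sym[OF fin] rk_top assms(3) by simp
  ultimately show ?thesis
    using Md.indep_if_rk_eq_card finite_Sym by (metis le_antisym)
qed

text \<open>\<alpha> \<cdot> Sym_i(B) has the same rank as e^{d-i} \<cdot> Sym_i(B), which lies inside the basis Sym_d(B).\<close>

lemma indep_translate_Sym_basis:
  assumes "B \<subseteq> E" "indep B" "card B = rk indep E" "e \<in> B" "i \<in> {1..d}"
    and "\<alpha> \<in> Sym (d - i) E" "loop_free E indep \<alpha>"
  shows "Ms d ((+) \<alpha> ` Sym i B)"
proof -
  define \<epsilon> where "\<epsilon> = replicate_mset (d - i) e"
  have \<epsilon>: "\<epsilon> \<in> Sym (d - i) E" "loop_free E indep \<epsilon>"
    using assms(1,2,4) indep_subset[of B "{e}"]
    by (auto simp: Sym_def \<epsilon>_def loop_free_def loop_def)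
  have sub: "Sym i B \<subseteq> Sym i E"
    using Sym_mono assms(1) by blast
  have "(+) \<epsilon> ` Sym i B \<subseteq> Sym d B"
    using assms(4,5) by (auto simp: Sym_def \<epsilon>_def split: if_splits)
  then have indep_\<epsilon>: "Ms d ((+) \<epsilon> ` Sym i B)"
    using Md.indep_subset indep_Sym_basis assms(1-3) by blast
  have "rk (Ms d) ((+) \<alpha> ` Sym i B) = rk (Ms i) (Sym i B)"
    using rk_translate assms sub by blast
  also have "\<dots> = rk (Ms d) ((+) \<epsilon> ` Sym i B)"
    using rk_translate[OF assms(5) \<epsilon> sub] by simp
  also have "\<dots> = card (Sym i B)"
    using Md.rk_indep[OF indep_\<epsilon>] by (simp add: card_image)
  also have "\<dots> = card ((+) \<alpha> ` Sym i B)"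
    by (simp add: card_image)
  finally show ?thesis
    using finite_Sym assms(1) finite_ground finite_subset
    by (intro Md.indep_if_rk_eq_card) blast+
qed

context
  fixes F :: "'a set"
  assumes flat_F: "flat E indep F"
begin

lemma loop_free_outside_flat: "set_mset \<alpha> \<subseteq> E - F \<Longrightarrow> loop_free E indep \<alpha>"
  using flat_not_loop[OF flat_F] by (auto simp: loop_free_def)

lemma FSym_translate_inter:
  assumes "e \<in> E - F"
  shows "(+) \<alpha> ` FSym F (Suc k) E \<inter> (+) (\<alpha> + {#e#}) ` Sym k E = (+) (\<alpha> + {#e#}) ` FSym F k E"
proof (intro equalityI subsetI)
  fix x assume "x \<in> (+) \<alpha> ` FSym F (Suc k) E \<inter> (+) (\<alpha> + {#e#}) ` Sym k E"
  then obtain \<delta> \<gamma> where \<delta>\<gamma>: "\<delta> \<in> FSym F (Suc k) E" "\<gamma> \<in> Sym k E" "x = \<alpha> + \<delta>" "x = \<alpha> + {#e#} + \<gamma>"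
    by blast
  then have "\<delta> = \<gamma> + {#e#}"
    by (simp add: ac_simps)
  then have "\<gamma> \<in> FSym F k E"
    using \<delta>\<gamma>(1,2) assms by (auto simp: FSym_def)
  with \<delta>\<gamma> show "x \<in> (+) (\<alpha> + {#e#}) ` FSym F k E"
    by blast
next
  fix x assume "x \<in> (+) (\<alpha> + {#e#}) ` FSym F k E"
  then obtain \<gamma> where \<gamma>: "\<gamma> \<in> FSym F k E" "x = \<alpha> + (\<gamma> + {#e#})"
    by (auto simp: ac_simps)
  then have "\<gamma> + {#e#} \<in> FSym F (Suc k) E"
    using assms by (auto simp: FSym_def Sym_def)
  with \<gamma> show "x \<in> (+) \<alpha> ` FSym F (Suc k) E \<inter> (+) (\<alpha> + {#e#}) ` Sym k E"
    by (auto simp: FSym_def ac_simps)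
qed

lemma translate_FSym_spanned:
  assumes B: "B \<subseteq> E" "\<forall>x\<in>E. in_closure x B"
    and BF: "BF \<subseteq> B" "BF \<subseteq> F" "\<forall>x\<in>F. in_closure x BF"
    and "Suc k \<le> d" "\<alpha> \<in> Sym (d - Suc k) E" "x \<in> (+) \<alpha> ` FSym F (Suc k) E"
  shows "Md.in_closure x ((+) \<alpha> ` Sym (Suc k) B \<inter> (+) \<alpha> ` FSym F (Suc k) E)"
    (is "Md.in_closure x ?C")
proof -
  obtain \<delta>' where \<delta>': "\<delta>' \<in> FSym F (Suc k) E" "x = \<alpha> + \<delta>'"
    using assms(8) by blast
  then obtain f where f: "f \<in> F" "f \<in># \<delta>'"
    by (auto simp: FSym_def)
  define \<delta> where "\<delta> = \<delta>' - {#f#}"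
  have "\<delta>' = \<delta> + {#f#}"
    using f(2) by (simp add: \<delta>_def)
  then have x: "x = \<alpha> + {#f#} + \<delta>" and \<delta>: "\<delta> \<in> Sym k E"
    using \<delta>' by (auto simp: FSym_def Sym_def ac_simps)
  have FE: "F \<subseteq> E"
    using flat_F by (simp add: flat_def)
  have \<alpha>f: "\<alpha> + {#f#} \<in> Sym (d - k) E"
    using assms(6,7) f FE by (auto simp: Sym_def)
  have "Md.in_closure x ((+) (\<alpha> + {#f#}) ` Sym k B)"
    using in_closure_translate_Sym[OF B _ \<alpha>f \<delta>] assms(6) unfolding x by simp
  moreover have "\<forall>a\<in>(+) (\<alpha> + {#f#}) ` Sym k B. Md.in_closure a ?C"
  proof
    fix a assume "a \<in> (+) (\<alpha> + {#f#}) ` Sym k B"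
    then obtain \<eta> where \<eta>: "\<eta> \<in> Sym k B" "a = \<alpha> + {#f#} + \<eta>"
      by blast
    then have a: "a = (\<alpha> + \<eta>) + {#f#}"
      by (simp add: ac_simps)
    have "\<alpha> + \<eta> \<in> Sym (d - 1) E"
      using \<eta>(1) assms(6,7) B(1) by (auto simp: Sym_def)
    then have "Md.in_closure a ((\<lambda>s. (\<alpha> + \<eta>) + {#s#}) ` BF)"
      using in_closure_translate_singleton BF FE f(1) a by blast
    moreover have "(\<lambda>s. (\<alpha> + \<eta>) + {#s#}) ` BF \<subseteq> ?C"
    proof (rule image_subsetI)
      fix s assume s: "s \<in> BF"
      then have "\<eta> + {#s#} \<in> Sym (Suc k) B \<inter> FSym F (Suc k) E"
        using \<eta>(1) BF(1,2) B(1) by (auto simp: Sym_def FSym_def)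
      then show "(\<alpha> + \<eta>) + {#s#} \<in> ?C"
        by (metis IntD1 IntD2 IntI add.assoc imageI)
    qed
    ultimately show "Md.in_closure a ?C"
      using Md.in_closure_mono by blast
  qed
  moreover have "finite ((+) (\<alpha> + {#f#}) ` Sym k B)"
    using finite_Sym B(1) finite_ground finite_subset by blast
  ultimately show ?thesis
    using Md.in_closure_trans by blast
qed

lemma rk_modular_translate_FSym:
  assumes e: "e \<in> E - F" and "Suc k \<le> d" "\<alpha> \<in> Sym (d - Suc k) E" "set_mset \<alpha> \<subseteq> E - F"
  defines "X \<equiv> (+) \<alpha> ` FSym F (Suc k) E" and "U \<equiv> (+) (\<alpha> + {#e#}) ` Sym k E"
  shows "rk (Ms d) X + rk (Ms d) U \<le> rk (Ms d) (X \<union> U) + rk (Ms d) ((+) (\<alpha> + {#e#}) ` FSym F k E)"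
proof -
  obtain BF where BF: "BF \<subseteq> F" "indep BF" "card BF = rk indep F"
    by (rule obtain_rk_indep)
  then have "indep (insert e BF)"
    using flat_insert_basis_indep[OF flat_F e] by blast
  then obtain B where B: "insert e BF \<subseteq> B" "B \<subseteq> E" "indep B" "card B = rk indep E"
    using indep_extend[of "insert e BF" E] indep_subset_ground by blast
  have spans: "\<forall>x\<in>E. in_closure x B" and spans_F: "\<forall>x\<in>F. in_closure x BF"
    using in_closure_basis B BF by blast+
  define C where "C = (+) \<alpha> ` Sym (Suc k) B"
  have "Ms d C"
    unfolding C_def using assms B loop_free_outside_flat
    by (intro indep_translate_Sym_basis[where e = e]) auto
  moreover have "finite X" "finite U"
    using finite_Sym[OF finite_ground] by (auto simp: X_def U_def FSym_def)
  moreover have "\<forall>x\<in>X. Md.in_closure x (C \<inter> X)"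
    using translate_FSym_spanned[OF B(2) spans _ BF(1) spans_F] B(1) BF(1) assms(2,3)
    unfolding C_def X_def by blast
  moreover have "\<forall>u\<in>U. Md.in_closure u (C \<inter> U)"
  proof
    fix u assume "u \<in> U"
    then obtain \<gamma> where "\<gamma> \<in> Sym k E" "u = \<alpha> + {#e#} + \<gamma>"
      by (auto simp: U_def)
    moreover have "\<alpha> + {#e#} \<in> Sym (d - k) E"
      using assms(2,3) e by (auto simp: Sym_def)
    ultimately have "Md.in_closure u ((+) (\<alpha> + {#e#}) ` Sym k B)"
      using in_closure_translate_Sym[OF B(2) spans, of k "\<alpha> + {#e#}" \<gamma>] assms(2) by simp
    moreover have "(+) (\<alpha> + {#e#}) ` Sym k B \<subseteq> C \<inter> U"
      using B Sym_mono[OF B(2)] by (fastforce simp: C_def U_def Sym_def ac_simps)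
    ultimately show "Md.in_closure u (C \<inter> U)"
      using Md.in_closure_mono by blast
  qed
  ultimately show ?thesis
    using Md.rk_modular_if_spanned[of C X U] FSym_translate_inter[OF e] by (simp add: X_def U_def)
qed

lemma rk_translate_FSym_less:
  "k \<le> d \<Longrightarrow> \<alpha> \<in> Sym (d - k) E \<Longrightarrow> set_mset \<alpha> \<subseteq> E - F \<Longrightarrow>
    \<beta> \<in> Sym k E \<Longrightarrow> set_mset \<beta> \<subseteq> E - F \<Longrightarrow>
    rk (Ms d) ((+) \<alpha> ` FSym F k E) < rk (Ms d) (insert (\<alpha> + \<beta>) ((+) \<alpha> ` FSym F k E))"
proof (induction k arbitrary: \<alpha> \<beta>)
  case 0
  then obtain a where a: "a \<in># \<alpha>"
    using d_pos by (cases \<alpha>) (auto simp: Sym_def)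
  define \<alpha>' where "\<alpha>' = \<alpha> - {#a#}"
  have \<alpha>: "\<alpha> = \<alpha>' + {#a#}" "a \<in> E - F"
    using a 0 by (auto simp: \<alpha>'_def)
  have "\<alpha>' \<in> Sym (d - 1) E" "loop_free E indep \<alpha>'"
    using 0 \<alpha> loop_free_outside_flat by (auto simp: Sym_def)
  then have "rk (Ms d) {\<alpha>} = rk indep {a}"
    using rk_translate_singletons[of \<alpha>' "{a}"] \<alpha> by simp
  also have "\<dots> = 1"
    using flat_not_loop[OF flat_F \<alpha>(2)] \<alpha>(2) rk_indep[of "{a}"] by (simp add: loop_def)
  moreover have "FSym F 0 E = {}" "\<beta> = {#}"
    using 0 by (auto simp: FSym_def Sym_def)
  ultimately show ?case
    using Md.rk_le_card[of "{}"] by simp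
next
  case (Suc k)
  then obtain e where e: "e \<in># \<beta>"
    by (cases \<beta>) (auto simp: Sym_def)
  define \<beta>' where "\<beta>' = \<beta> - {#e#}"
  define \<alpha>' where "\<alpha>' = \<alpha> + {#e#}"
  define X where "X = (+) \<alpha> ` FSym F (Suc k) E"
  define U where "U = (+) \<alpha>' ` Sym k E"
  define Z where "Z = (+) \<alpha>' ` FSym F k E"
  have eEF: "e \<in> E - F" and m: "\<alpha> + \<beta> = \<alpha>' + \<beta>'"
    using e Suc.prems by (auto simp: \<alpha>'_def \<beta>'_def)
  have \<alpha>': "\<alpha>' \<in> Sym (d - k) E" "set_mset \<alpha>' \<subseteq> E - F"
    and \<beta>': "\<beta>' \<in> Sym k E" "set_mset \<beta>' \<subseteq> E - F"
    using Suc.prems e eEF by (auto simp: Sym_def \<alpha>'_def \<beta>'_def size_Diff_singleton dest: in_diffD)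
  have IH: "rk (Ms d) Z < rk (Ms d) (insert (\<alpha> + \<beta>) Z)"
    using Suc.IH[OF _ \<alpha>' \<beta>'] Suc.prems m by (simp add: Z_def)
  have "X \<inter> U = Z"
    using FSym_translate_inter[OF eEF] by (simp add: X_def U_def Z_def \<alpha>'_def)
  moreover have "\<alpha> + \<beta> \<in> U"
    using m \<beta>' by (simp add: U_def)
  ultimately have "insert (\<alpha> + \<beta>) X \<union> U = X \<union> U" "insert (\<alpha> + \<beta>) X \<inter> U = insert (\<alpha> + \<beta>) Z"
    by blast+
  then have "rk (Ms d) (X \<union> U) + rk (Ms d) (insert (\<alpha> + \<beta>) Z) \<le> rk (Ms d) (insert (\<alpha> + \<beta>) X) + rk (Ms d) U"
    using Md.rk_submodular[of "insert (\<alpha> + \<beta>) X" U] by simp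
  moreover have "rk (Ms d) X + rk (Ms d) U \<le> rk (Ms d) (X \<union> U) + rk (Ms d) Z"
    using rk_modular_translate_FSym[OF eEF] Suc.prems by (simp add: X_def U_def Z_def \<alpha>'_def)
  ultimately show ?case
    using IH unfolding X_def[symmetric] by linarith
qed

lemma flat_FSym: "flat (Sym d E) (Ms d) (FSym F d E)"
  unfolding flat_def
proof (intro conjI ballI)
  show "FSym F d E \<subseteq> Sym d E"
    by (auto simp: FSym_def)
next
  fix m assume m: "m \<in> Sym d E - FSym F d E"
  then have "set_mset m \<subseteq> E - F"
    by (auto simp: FSym_def Sym_def)
  then show "rk (Ms d) (FSym F d E) < rk (Ms d) (insert m (FSym F d E))"
    using rk_translate_FSym_less[of d "{#}" m] m by (simp add: Sym_def)
qed

end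

end

theorem proposition2p19:
  fixes E :: "'a set" and indep :: "'a set \<Rightarrow> bool"
    and d :: nat and Ms :: "nat \<Rightarrow> 'a multiset set \<Rightarrow> bool" and F :: "'a set"
  assumes "matroid E indep"
    and "1 \<le> d"
    and "sym_power E indep d Ms"
    and "flat E indep F"
  shows "flat (Sym d E) (Ms d) (FSym F d E)"
proof -
  interpret symmetric_power E indep d Ms
    using assms unfolding symmetric_power_def symmetric_power_axioms_def
      symmetric_quasi_power_def symmetric_quasi_power_axioms_def finite_matroid_def sym_power_def
    by blast
  show ?thesis
    using flat_FSym assms(4) .
qed

end
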